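(* Fix integers $t\ge1$, $C_1,\dots,C_t\ge1$, and $A_i,B_i$ with $0\le A_i\le C_i/2$, $0\le B_i\le C_i/2$ for all $i$, and an integer $m$. For each integer $N$ let $S_N$ be the set of tuples $(\mu_1,\dots,\mu_t;d_1,\dots,d_t)\in P^t\times\mathbb Z^t$ with $\sum_i d_i$ odd and $\sum_i C_i|\mu_i|+\sum_iC_i\binom{d_i}{2}+\sum_iA_id_i=N$, and let $T_N$ be the set of tuples $(\alpha_1,\dots,\alpha_t;e_1,\dots,e_t)\in P^t\times\mathbb Z^t$ with $\sum_ie_i$ odd and $\sum_iC_i|\alpha_i|+\sum_iC_i\binom{e_i}{2}+\sum_iB_ie_i+m=N$. Assume $m$ is such that the smallest $N$ with $T_N\neq\emptyset$ equals the second smallest $N$ with $S_N\ne\emptyset$. Let $k$ be the smallest $N$ with $S_N\ne\emptyset$. For each $N$ define $$u_N=\#\Big\{(d_1,\dots,d_t)\in\mathbb Z^t:\ \textstyle\sum d_i\text{ odd},\ \sum_iC_i\binom{d_i}{2}+\sum_iA_id_i=N\Big\}+|S_k|\cdot\#\Big\{(f_1,\dots,f_t)\in\mathbb Z^t:\ \textstyle\sum f_i\text{ odd},\ \sum_iC_i\frac{f_i(3f_i-1)}{2}+k=N\Big\},$$ $$v_N=\#\Big\{(e_1,\dots,e_t)\in\mathbb Z^t:\ \textstyle\sum e_i\text{ odd},\ \sum_iC_i\binom{e_i}{2}+\sum_iB_ie_i+m=N\Big\}+|S_k|\cdot\#\Big\{(f_1,\dots,f_t)\in\mathbb Z^t:\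 \textstyle\sum f_i\text{ even},\ \sum_iC_i\frac{f_i(3f_i-1)}{2}+k=N\Big\}.$$ (These are the cardinalities of the sets $U_N$, $V_N$ formed as disjoint unions of the first set with $|S_k|$ copies of the second set.) Then $|S_N|=|T_N|$ for all $N>k$ if and only if $u_N=v_N$ for all integers $N$.
   Context: $P$ denotes the set of all integer partitions into positive parts (including the empty partition); for a partition $\lambda$, $|\lambda|$ is the sum of its parts. For $d\in\mathbb Z$, $\binom{d}{2}=d(d-1)/2$. *)

theory Defs
  imports Main "HOL-Library.Multiset" "HOL-Library.FuncSet"
begin

definition partitions :: "nat multiset set" where
  "partitions = {lam. \<forall>x\<in>#lam. 0 < x}"

definition psize :: "nat multiset \<Rightarrow> nat" where
  "psize lam = sum_mset lam"

text \<open>binomial d choose 2 = d(d-1)/2 for integer d (exact division).\<close>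
definition binom2 :: "int \<Rightarrow> int" where
  "binom2 d = d * (d - 1) div 2"

text \<open>pentagonal f(3f-1)/2 (exact division).\<close>
definition pent :: "int \<Rightarrow> int" where
  "pent f = f * (3 * f - 1) div 2"

text \<open>Tuples indexed by i in {0..<t} (i.e. 1..t shifted).\<close>
definition Sset :: "nat \<Rightarrow> (nat \<Rightarrow> int) \<Rightarrow> (nat \<Rightarrow> int) \<Rightarrow> int
    \<Rightarrow> ((nat \<Rightarrow> nat multiset) \<times> (nat \<Rightarrow> int)) set" where
  "Sset t C A N = {(mu, d). mu \<in> {..<t} \<rightarrow>\<^sub>E partitions \<and> d \<in> {..<t} \<rightarrow>\<^sub>E (UNIV :: int set)
     \<and> odd (\<Sum>i<t. d i)
     \<and> (\<Sum>i<t. C i * int (psize (mu i))) + (\<Sum>i<t. C i * binom2 (d i)) + (\<Sum>i<t. A i * d i) = N}"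

definition Tset :: "nat \<Rightarrow> (nat \<Rightarrow> int) \<Rightarrow> (nat \<Rightarrow> int) \<Rightarrow> int \<Rightarrow> int
    \<Rightarrow> ((nat \<Rightarrow> nat multiset) \<times> (nat \<Rightarrow> int)) set" where
  "Tset t C B m N = {(al, e). al \<in> {..<t} \<rightarrow>\<^sub>E partitions \<and> e \<in> {..<t} \<rightarrow>\<^sub>E (UNIV :: int set)
     \<and> odd (\<Sum>i<t. e i)
     \<and> (\<Sum>i<t. C i * int (psize (al i))) + (\<Sum>i<t. C i * binom2 (e i)) + (\<Sum>i<t. B i * e i) + m = N}"

definition uN :: "nat \<Rightarrow> (nat \<Rightarrow> int) \<Rightarrow> (nat \<Rightarrow> int) \<Rightarrow> int \<Rightarrow> int \<Rightarrow> nat" where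
  "uN t C A k N =
     card {d. d \<in> {..<t} \<rightarrow>\<^sub>E (UNIV :: int set) \<and> odd (\<Sum>i<t. d i)
              \<and> (\<Sum>i<t. C i * binom2 (d i)) + (\<Sum>i<t. A i * d i) = N}
   + card (Sset t C A k) *
     card {f. f \<in> {..<t} \<rightarrow>\<^sub>E (UNIV :: int set) \<and> odd (\<Sum>i<t. f i)
              \<and> (\<Sum>i<t. C i * pent (f i)) + k = N}"

definition vN :: "nat \<Rightarrow> (nat \<Rightarrow> int) \<Rightarrow> (nat \<Rightarrow> int) \<Rightarrow> (nat \<Rightarrow> int) \<Rightarrow> int \<Rightarrow> int \<Rightarrow> int \<Rightarrow> nat" where
  "vN t C A B m k N =
     card {e. e \<in> {..<t} \<rightarrow>\<^sub>E (UNIV :: int set) \<and> odd (\<Sum>i<t. e i)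
              \<and> (\<Sum>i<t. C i * binom2 (e i)) + (\<Sum>i<t. B i * e i) + m = N}
   + card (Sset t C A k) *
     card {f. f \<in> {..<t} \<rightarrow>\<^sub>E (UNIV :: int set) \<and> even (\<Sum>i<t. f i)
              \<and> (\<Sum>i<t. C i * pent (f i)) + k = N}"

end

theory Submission
  imports Defs "HOL-Computational_Algebra.Formal_Power_Series"
begin

(* Proof by generating functions.  Then
     sum_N |S_N| X^N = P * Theta_A,      sum_N |T_N| X^N = P * Theta_B,
   where P is the series of t-tuples of partitions (weight sum_i C_i |mu_i|) and Theta_A,
   Theta_B are the series of odd integer tuples with the quadratic weights (Theta_B shifted
   by m).  Since T_N is empty for N <= k, the left-hand side of the theorem says
   P Theta_A - P Theta_B = |S_k| X^k.  By Euler's pentagonal number theorem (in each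
   variable X^C_i) P has the inverse F = sum_f (-1)^(sum f) X^(sum_i C_i f_i(3f_i-1)/2)
   = E - O, so this is equivalent to Theta_A - Theta_B = |S_k| X^k (E - O), which compared
   coefficientwise is u_N = v_N. *)

unbundle fps_syntax

definition gser :: "'a set \<Rightarrow> ('a \<Rightarrow> int) \<Rightarrow> ('a \<Rightarrow> int) \<Rightarrow> int fps" where
  "gser X w s = Abs_fps (\<lambda>n. \<Sum>x\<in>{x\<in>X. w x = int n}. s x)"

text \<open>Nonnegative weights with finite fibres: the setting in which the series of a union,
  a product or a reindexed set is computed from its parts.\<close>
definition admissible :: "'a set \<Rightarrow> ('a \<Rightarrow> int) \<Rightarrow> bool" where
  "admissible X w \<longleftrightarrow> (\<forall>x\<in>X. 0 \<le> w x) \<and> (\<forall>n. finite {x\<in>X. w x = n})"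

lemma gser_nth: "gser X w s $ n = (\<Sum>x\<in>{x\<in>X. w x = int n}. s x)"
  by (simp add: gser_def)

lemma gser_cong:
  assumes "\<And>x. x \<in> X \<Longrightarrow> s x = s' x"
  shows "gser X w s = gser X w s'"
  by (rule fps_ext) (simp add: gser_nth assms)

lemma gser_diff: "gser X w (\<lambda>x. s1 x - s2 x) = gser X w s1 - gser X w s2"
  by (rule fps_ext) (simp add: gser_nth sum_subtractf)

lemma gser_card: "gser X w (\<lambda>_. 1) $ n = int (card {x\<in>X. w x = int n})"
  by (simp add: gser_nth)

lemma gser_indicator:
  assumes "finite {x\<in>X. w x = int n}"
  shows "gser X w (\<lambda>x. if P x then 1 else 0) $ n = int (card {x\<in>X. w x = int n \<and> P x})"
proof -
  have "gser X w (\<lambda>x. if P x then 1 else 0) $ n = (\<Sum>x\<in>{x\<in>{x\<in>X. w x = int n}. P x}. 1)"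
    unfolding gser_nth using assms by (rule sum.inter_filter[symmetric])
  also have "{x\<in>{x\<in>X. w x = int n}. P x} = {x\<in>X. w x = int n \<and> P x}" by auto
  finally show ?thesis by simp
qed

lemma admissible_subset:
  assumes "admissible X w" and "Y \<subseteq> X"
  shows "admissible Y w"
proof -
  have "finite {x\<in>Y. w x = n}" for n
  proof (rule finite_subset)
    show "{x\<in>Y. w x = n} \<subseteq> {x\<in>X. w x = n}" using assms(2) by auto
    show "finite {x\<in>X. w x = n}" using assms(1) unfolding admissible_def by simp
  qed
  then show ?thesis using assms unfolding admissible_def by auto
qed

lemma gser_Un:
  assumes "admissible X w" and "admissible Y w" and "X \<inter> Y = {}"
  shows "gser (X \<union> Y) w s = gser X w s + gser Y w s"
proof (rule fps_ext)
  fix n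
  have "{x\<in>X \<union> Y. w x = int n} = {x\<in>X. w x = int n} \<union> {x\<in>Y. w x = int n}" by auto
  then show "gser (X \<union> Y) w s $ n = (gser X w s + gser Y w s) $ n"
    unfolding gser_nth fps_add_nth using assms unfolding admissible_def
    by (simp add: sum.union_disjoint disjoint_iff)
qed

lemma gser_shift:
  assumes "\<forall>y\<in>Y. 0 \<le> w y"
  shows "gser Y (\<lambda>y. w y + int a) s = fps_X ^ a * gser Y w s"
proof (rule fps_ext)
  fix n
  show "gser Y (\<lambda>y. w y + int a) s $ n = (fps_X ^ a * gser Y w s) $ n"
  proof (cases "n < a")
    case True
    then have "{y\<in>Y. w y + int a = int n} = {}" using assms by force
    then show ?thesis using True by (simp only: gser_nth fps_X_power_mult_nth) simp
  next
    case False
    then have "{y\<in>Y. w y + int a = int n} = {y\<in>Y. w y = int (n - a)}" by auto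
    then show ?thesis using False by (simp add: gser_nth fps_X_power_mult_nth)
  qed
qed

lemma gser_insert:
  assumes "finite X" and "a \<notin> X" and "0 \<le> w a"
  shows "gser (insert a X) w s = gser X w s + fps_const (s a) * fps_X ^ nat (w a)"
proof (rule fps_ext)
  fix n
  show "gser (insert a X) w s $ n = (gser X w s + fps_const (s a) * fps_X ^ nat (w a)) $ n"
  proof (cases "w a = int n")
    case True
    then have "{x\<in>insert a X. w x = int n} = insert a {x\<in>X. w x = int n}" by auto
    moreover have "n = nat (w a)" using True by simp
    ultimately show ?thesis using assms by (simp add: gser_nth)
  next
    case False
    then have "{x\<in>insert a X. w x = int n} = {x\<in>X. w x = int n}" by auto
    moreover have "n \<noteq> nat (w a)" using False assms(3) by auto
    ultimately show ?thesis by (simp add: gser_nth)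
  qed
qed

lemma gser_reindex:
  assumes "bij_betw h Y X"
  shows "gser Y (\<lambda>y. w (h y)) (\<lambda>y. s (h y)) = gser X w s"
proof (rule fps_ext)
  fix n
  have "bij_betw h {y\<in>Y. w (h y) = int n} {x\<in>X. w x = int n}"
    using assms unfolding bij_betw_def inj_on_def by auto
  then show "gser Y (\<lambda>y. w (h y)) (\<lambda>y. s (h y)) $ n = gser X w s $ n"
    unfolding gser_nth by (rule sum.reindex_bij_betw)
qed

lemma admissible_reindex:
  assumes "bij_betw h Y X" and "admissible Y (\<lambda>y. w (h y))"
  shows "admissible X w"
proof -
  have "{x\<in>X. w x = n} = h ` {y\<in>Y. w (h y) = n}" for n
    using assms(1) unfolding bij_betw_def by auto
  then show ?thesis using assms unfolding admissible_def bij_betw_def by auto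
qed

text \<open>A fibre of a product with additive weight decomposes by the weight of the first
  component; this is the combinatorial content of the Cauchy product.\<close>
lemma fibre_times:
  assumes "admissible X w1" and "admissible Y w2"
  shows "{p\<in>X\<times>Y. w1 (fst p) + w2 (snd p) = int n}
       = (\<Union>i\<in>{0..n}. {x\<in>X. w1 x = int i} \<times> {y\<in>Y. w2 y = int (n - i)})"
proof safe
  fix x y assume xy: "x \<in> X" "y \<in> Y" "w1 (fst (x, y)) + w2 (snd (x, y)) = int n"
  have "0 \<le> w1 x" "0 \<le> w2 y" using assms xy unfolding admissible_def by auto
  then show "(x, y) \<in> (\<Union>i\<in>{0..n}. {x\<in>X. w1 x = int i} \<times> {y\<in>Y. w2 y = int (n - i)})"
    using xy by (intro UN_I[of "nat (w1 x)"]) auto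
qed auto

lemma gser_times:
  assumes "admissible X w1" and "admissible Y w2"
  shows "gser (X \<times> Y) (\<lambda>p. w1 (fst p) + w2 (snd p)) (\<lambda>p. s1 (fst p) * s2 (snd p))
        = gser X w1 s1 * gser Y w2 s2"
proof (rule fps_ext)
  fix n
  have fin1: "finite {x\<in>X. w1 x = i}" and fin2: "finite {y\<in>Y. w2 y = i}" for i
    using assms unfolding admissible_def by auto
  have "gser (X \<times> Y) (\<lambda>p. w1 (fst p) + w2 (snd p)) (\<lambda>p. s1 (fst p) * s2 (snd p)) $ n
      = (\<Sum>i=0..n. \<Sum>p\<in>{x\<in>X. w1 x = int i} \<times> {y\<in>Y. w2 y = int (n - i)}. s1 (fst p) * s2 (snd p))"
    unfolding gser_nth fibre_times[OF assms] by (rule sum.UNION_disjoint) (auto simp: fin1 fin2)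
  also have "\<dots> = (\<Sum>i=0..n. gser X w1 s1 $ i * gser Y w2 s2 $ (n - i))"
    unfolding gser_nth sum_product sum.cartesian_product by (simp add: case_prod_beta)
  finally show "gser (X \<times> Y) (\<lambda>p. w1 (fst p) + w2 (snd p)) (\<lambda>p. s1 (fst p) * s2 (snd p)) $ n
      = (gser X w1 s1 * gser Y w2 s2) $ n"
    by (simp add: fps_mult_nth)
qed

lemma admissible_times:
  assumes "admissible X w1" and "admissible Y w2"
  shows "admissible (X \<times> Y) (\<lambda>p. w1 (fst p) + w2 (snd p))"
proof -
  have fin1: "finite {x\<in>X. w1 x = i}" and fin2: "finite {y\<in>Y. w2 y = i}" for i
    using assms unfolding admissible_def by auto
  have "finite {p\<in>X\<times>Y. w1 (fst p) + w2 (snd p) = n}" for n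
  proof (cases "n < 0")
    case True
    then have "{p\<in>X\<times>Y. w1 (fst p) + w2 (snd p) = n} = {}"
      using assms unfolding admissible_def by force
    then show ?thesis by (metis finite.emptyI)
  next
    case False
    then obtain j where "n = int j" by (metis nonneg_int_cases not_less)
    moreover have "finite (\<Union>i\<in>{0..j}. {x\<in>X. w1 x = int i} \<times> {y\<in>Y. w2 y = int (j - i)})"
      by (auto simp: fin1 fin2)
    ultimately show ?thesis using fibre_times[OF assms, of j] by simp
  qed
  then show ?thesis using assms unfolding admissible_def by auto
qed

lemma gser_PiE:
  fixes t :: nat
  assumes "\<And>i. i < t \<Longrightarrow> admissible (X i) (w i)"
  shows "gser (PiE {..<t} X) (\<lambda>f. \<Sum>i<t. w i (f i)) (\<lambda>f. \<Prod>i<t. s i (f i))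
           = (\<Prod>i<t. gser (X i) (w i) (s i))
        \<and> admissible (PiE {..<t} X) (\<lambda>f. \<Sum>i<t. w i (f i))"
  using assms
proof (induction t)
  case 0
  have "gser (PiE {..<0} X) (\<lambda>f. \<Sum>i<0. w i (f i)) (\<lambda>f. \<Prod>i<0. s i (f i)) = 1"
    by (rule fps_ext) (auto simp: gser_nth)
  then show ?case by (auto simp: admissible_def)
next
  case (Suc t)
  let ?h = "\<lambda>(y, g). g(t := y)"
  let ?Y = "X t \<times> PiE {..<t} X"
  have IH: "gser (PiE {..<t} X) (\<lambda>f. \<Sum>i<t. w i (f i)) (\<lambda>f. \<Prod>i<t. s i (f i))
           = (\<Prod>i<t. gser (X i) (w i) (s i))"
           "admissible (PiE {..<t} X) (\<lambda>f. \<Sum>i<t. w i (f i))" using Suc by auto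
  have adm_t: "admissible (X t) (w t)" using Suc.prems by simp
  have bij: "bij_betw ?h ?Y (PiE {..<Suc t} X)"
    unfolding bij_betw_def lessThan_Suc
    using inj_combinator[of t "{..<t}" X] PiE_insert_eq[of t "{..<t}" X] by simp
  have upd: "?h p i = snd p i" if "i < t" for p and i
    using that by (cases p) auto
  have upd_t: "?h p t = fst p" for p by (cases p) auto
  have wsum: "(\<Sum>i<Suc t. w i (?h p i)) = w t (fst p) + (\<Sum>i<t. w i (snd p i))" for p
    unfolding sum.lessThan_Suc upd_t using upd[of _ p] by simp
  have sprod: "(\<Prod>i<Suc t. s i (?h p i)) = s t (fst p) * (\<Prod>i<t. s i (snd p i))" for p
    unfolding prod.lessThan_Suc upd_t using upd[of _ p] by (simp add: mult.commute)
  have "gser (PiE {..<Suc t} X) (\<lambda>f. \<Sum>i<Suc t. w i (f i)) (\<lambda>f. \<Prod>i<Suc t. s i (f i))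
      = gser ?Y (\<lambda>p. w t (fst p) + (\<Sum>i<t. w i (snd p i))) (\<lambda>p. s t (fst p) * (\<Prod>i<t. s i (snd p i)))"
    using gser_reindex[OF bij, of "\<lambda>f. \<Sum>i<Suc t. w i (f i)" "\<lambda>f. \<Prod>i<Suc t. s i (f i)"]
    unfolding wsum sprod by simp
  also have "\<dots> = (\<Prod>i<Suc t. gser (X i) (w i) (s i))"
    using gser_times[OF adm_t IH(2), of "s t" "\<lambda>f. \<Prod>i<t. s i (f i)"] IH(1)
    by (simp add: mult.commute)
  finally have "gser (PiE {..<Suc t} X) (\<lambda>f. \<Sum>i<Suc t. w i (f i)) (\<lambda>f. \<Prod>i<Suc t. s i (f i))
      = (\<Prod>i<Suc t. gser (X i) (w i) (s i))" .
  moreover have "admissible (PiE {..<Suc t} X) (\<lambda>f. \<Sum>i<Suc t. w i (f i))"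
    using admissible_reindex[OF bij, of "\<lambda>f. \<Sum>i<Suc t. w i (f i)"]
      admissible_times[OF adm_t IH(2)] unfolding wsum by blast
  ultimately show ?case by blast
qed

fun tri :: "nat \<Rightarrow> nat" where
  "tri 0 = 0" | "tri (Suc n) = tri n + Suc n"

lemma tri_eq: "2 * tri n = n * (n + 1)"
  by (induction n) (auto simp: algebra_simps)

lemma tri_ge: "i \<le> tri i"
  by (induction i) auto

definition qprod :: "'a::comm_ring_1 \<Rightarrow> nat \<Rightarrow> nat \<Rightarrow> 'a" where
  "qprod x a b = (\<Prod>j\<in>{a..b}. 1 - x ^ j)"

lemma qprod_Suc_right: "a \<le> Suc b \<Longrightarrow> qprod x a (Suc b) = qprod x a b * (1 - x ^ Suc b)"
  unfolding qprod_def by (simp add: prod.cl_ivl_Suc)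

lemma qprod_Suc_left: "a \<le> b \<Longrightarrow> qprod x a b = (1 - x ^ a) * qprod x (Suc a) b"
  unfolding qprod_def by (simp add: prod.atLeast_Suc_atMost)

lemma qprod_empty: "b < a \<Longrightarrow> qprod x a b = 1"
  unfolding qprod_def by simp

text \<open>Shanks' identity: for every \<open>n\<close>, in any commutative ring,
  \<open>\<Sum>k\<le>n. (-1)^k x^(kn + k(k+1)/2) (1 - x^(k+1)) \<cdots> (1 - x^n)\<close> equals
  \<open>1 + \<Sum>i=1..n. (-1)^i (x^(i(3i-1)/2) + x^(i(3i+1)/2))\<close>.\<close>
definition shanks_term :: "'a::comm_ring_1 \<Rightarrow> nat \<Rightarrow> nat \<Rightarrow> 'a" where
  "shanks_term x n k = (-1) ^ k * x ^ (k * n + tri k) * qprod x (Suc k) n"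

definition shanks_lhs :: "'a::comm_ring_1 \<Rightarrow> nat \<Rightarrow> 'a" where
  "shanks_lhs x n = (\<Sum>k\<le>n. shanks_term x n k)"

text \<open>The pentagonal numbers \<open>i(3i-1)/2\<close> and \<open>i(3i+1)/2\<close>.\<close>
definition pent_pos :: "nat \<Rightarrow> nat" where "pent_pos i = i * i + tri i - i"
definition pent_neg :: "nat \<Rightarrow> nat" where "pent_neg i = i * i + tri i"

definition shanks_rhs :: "'a::comm_ring_1 \<Rightarrow> nat \<Rightarrow> 'a" where
  "shanks_rhs x n = 1 + (\<Sum>i\<in>{1..n}. (-1) ^ i * (x ^ pent_pos i + x ^ pent_neg i))"

text \<open>Auxiliary terms for the induction step: passing from \<open>n\<close> to \<open>n+1\<close> changes the
  \<open>k\<close>-th summand by \<open>W k - U k\<close>, and these differences telescope since \<open>W (k+1) = U k\<close>.\<close>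
definition shanks_U :: "'a::comm_ring_1 \<Rightarrow> nat \<Rightarrow> nat \<Rightarrow> 'a" where
  "shanks_U x n k = (-1) ^ k * x ^ (k * (n + 1) + tri k + (n + 1)) * qprod x (Suc k) n"

definition shanks_W :: "'a::comm_ring_1 \<Rightarrow> nat \<Rightarrow> nat \<Rightarrow> 'a" where
  "shanks_W x n k = - ((-1) ^ k * x ^ (k * n + tri k) * qprod x k n)"

lemma shanks_term_Suc:
  assumes "k \<le> n"
  shows "shanks_term x (Suc n) k = shanks_term x n k + shanks_W x n k - shanks_U x n k"
proof -
  let ?s = "(-1::'a) ^ k" and ?a = "x ^ (k * n + tri k)" and ?P = "qprod x (Suc k) n"
  have T: "shanks_term x (Suc n) k = ?s * (?a * x ^ k) * (?P * (1 - x ^ Suc n))"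
    unfolding shanks_term_def using assms by (simp add: qprod_Suc_right power_add algebra_simps)
  have W: "shanks_W x n k = - (?s * ?a * ((1 - x ^ k) * ?P))"
    unfolding shanks_W_def using assms by (simp add: qprod_Suc_left)
  have U: "shanks_U x n k = ?s * (?a * x ^ k * x ^ Suc n) * ?P"
    unfolding shanks_U_def by (simp add: power_add algebra_simps)
  show ?thesis unfolding T W U by (simp add: shanks_term_def algebra_simps)
qed

lemma shanks_W_Suc: "shanks_W x n (Suc j) = shanks_U x n j"
proof -
  have e: "Suc j * n + tri (Suc j) = j * (n + 1) + tri j + (n + 1)" by (simp add: algebra_simps)
  show ?thesis unfolding shanks_W_def shanks_U_def e by simp
qed

lemma shanks_W_0: "shanks_W x n 0 = 0"
  unfolding shanks_W_def using qprod_Suc_left[of 0 n x] by simp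

lemma shanks_telescope: "(\<Sum>k\<le>m. shanks_W x n k - shanks_U x n k) = - shanks_U x n m"
  by (induction m) (simp_all add: shanks_W_0 shanks_W_Suc)

lemma shanks_lhs_Suc:
  "shanks_lhs x (Suc n) = shanks_lhs x n - shanks_U x n n + shanks_term x (Suc n) (Suc n)"
proof -
  have "(\<Sum>k\<le>n. shanks_term x (Suc n) k)
      = (\<Sum>k\<le>n. shanks_term x n k + (shanks_W x n k - shanks_U x n k))"
    by (rule sum.cong) (auto simp: shanks_term_Suc)
  also have "\<dots> = shanks_lhs x n - shanks_U x n n"
    unfolding sum.distrib shanks_telescope shanks_lhs_def by simp
  finally show ?thesis unfolding shanks_lhs_def by simp
qed

theorem shanks_identity: "shanks_lhs x n = shanks_rhs x n"
proof (induction n)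
  case 0
  then show ?case by (simp add: shanks_lhs_def shanks_rhs_def shanks_term_def qprod_empty)
next
  case (Suc n)
  have R: "shanks_rhs x (Suc n)
      = shanks_rhs x n + (-1) ^ Suc n * (x ^ pent_pos (Suc n) + x ^ pent_neg (Suc n))"
    unfolding shanks_rhs_def by (simp add: sum.cl_ivl_Suc)
  have "n * (n + 1) + tri n + (n + 1) = pent_pos (Suc n)"
    unfolding pent_pos_def by (simp add: algebra_simps)
  then have U: "shanks_U x n n = (-1) ^ n * x ^ pent_pos (Suc n)"
    unfolding shanks_U_def by (simp add: qprod_empty)
  have T: "shanks_term x (Suc n) (Suc n) = (-1) ^ Suc n * x ^ pent_neg (Suc n)"
    unfolding shanks_term_def pent_neg_def by (simp add: qprod_empty)
  show ?case unfolding shanks_lhs_Suc Suc R U T by (simp add: algebra_simps)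
qed

definition psign :: "int \<Rightarrow> int" where
  "psign j = (if even j then 1 else -1)"

lemma psign_add: "psign (a + b) = psign a * psign b"
  unfolding psign_def by auto

lemma prod_psign: fixes t :: nat shows "(\<Prod>i<t. psign (f i)) = psign (\<Sum>i<t. f i)"
  by (induction t) (auto simp: psign_add psign_def)

lemma psign_of_nat: "psign (int i) = (-1) ^ i" "psign (- int i) = (-1) ^ i"
  unfolding psign_def by (simp_all add: even_of_nat_iff)

lemma two_tri_int: "2 * int (tri i) = int i * (int i + 1)"
proof -
  have "int (2 * tri i) = int (i * (i + 1))" using tri_eq[of i] by (rule arg_cong)
  then show ?thesis by (simp add: algebra_simps)
qed

lemma pent_of_nat: "pent (int i) = int (pent_pos i)"
proof -
  have "i \<le> i * i" by (cases i) auto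
  then have "int (pent_pos i) = int (i * i) + int (tri i) - int i"
    unfolding pent_pos_def using tri_ge[of i] by (simp add: of_nat_diff)
  then have "2 * int (pent_pos i) = int i * (3 * int i - 1)"
    using two_tri_int[of i] by (simp add: algebra_simps)
  then show ?thesis unfolding pent_def by simp
qed

lemma pent_of_neg_nat: "pent (- int i) = int (pent_neg i)"
proof -
  have "- int i * (3 * - int i - 1) = 2 * int (pent_neg i)"
    unfolding pent_neg_def using two_tri_int[of i] by (simp add: algebra_simps)
  then show ?thesis unfolding pent_def by (simp only:)
qed

text \<open>Generalised pentagonal numbers grow at least linearly; in particular they are
  nonnegative, and each value is taken only finitely often.\<close>
lemma abs_le_pent: "\<bar>j\<bar> \<le> pent j"
proof (cases "j \<ge> 0")
  case True
  then obtain i where "j = int i" using nonneg_int_cases by blast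
  moreover have "i \<le> pent_pos i"
    using tri_ge[of i] unfolding pent_pos_def by (cases i) auto
  ultimately show ?thesis using pent_of_nat[of i] by simp
next
  case False
  then obtain i where "j = - int i" by (metis le_less neg_int_cases not_le)
  moreover have "i \<le> pent_neg i" unfolding pent_neg_def by (simp add: tri_ge trans_le_add2)
  ultimately show ?thesis using pent_of_neg_nat[of i] by simp
qed

lemma pent_nonneg: "0 \<le> pent j"
  using abs_le_pent[of j] by simp

definition parts_above :: "nat \<Rightarrow> nat multiset set" where
  "parts_above M = {l. \<forall>p\<in>#l. M < p}"

lemma mem_le_sum_mset: "x \<in># l \<Longrightarrow> x \<le> sum_mset (l :: nat multiset)"
  by (induction l) auto

lemma size_le_sum_mset: "\<forall>p\<in>#l. 0 < p \<Longrightarrow> size l \<le> sum_mset (l :: nat multiset)"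
  by (induction l) auto

lemma finite_partitions_le: "finite {l\<in>partitions. sum_mset l \<le> s}"
proof (rule finite_subset)
  show "{l\<in>partitions. sum_mset l \<le> s} \<subseteq> (\<Union>k\<in>{0..s}. multisets_of_size {1..s} k)"
  proof
    fix l assume l: "l \<in> {l\<in>partitions. sum_mset l \<le> s}"
    then have "size l \<le> s" using size_le_sum_mset unfolding partitions_def by fastforce
    moreover have "set_mset l \<subseteq> {1..s}"
      using l mem_le_sum_mset unfolding partitions_def by fastforce
    ultimately show "l \<in> (\<Union>k\<in>{0..s}. multisets_of_size {1..s} k)"
      unfolding multisets_of_size_def by auto
  qed
qed auto

definition part_series :: "nat \<Rightarrow> nat \<Rightarrow> int fps" where
  "part_series c M = gser (parts_above M) (\<lambda>l. int c * int (psize l)) (\<lambda>_. 1)"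

lemma admissible_partitions:
  assumes "0 < c"
  shows "admissible partitions (\<lambda>l. int c * int (psize l))"
proof -
  have "{l\<in>partitions. int c * int (psize l) = n} \<subseteq> {l\<in>partitions. sum_mset l \<le> nat n}" for n
  proof (rule subsetI)
    fix l assume l: "l \<in> {l\<in>partitions. int c * int (psize l) = n}"
    have "sum_mset l \<le> c * sum_mset l" using assms by simp
    also have "c * sum_mset l = nat n"
      using l unfolding psize_def by (metis (mono_tags, lifting) mem_Collect_eq nat_int of_nat_mult)
    finally show "l \<in> {l\<in>partitions. sum_mset l \<le> nat n}" using l by simp
  qed
  then have "finite {l\<in>partitions. int c * int (psize l) = n}" for n
    using finite_partitions_le finite_subset by blast
  then show ?thesis unfolding admissible_def by simp
qed

lemma admissible_parts_above:
  "0 < c \<Longrightarrow> admissible (parts_above M) (\<lambda>l. int c * int (psize l))"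
  by (erule admissible_subset[OF admissible_partitions]) (auto simp: parts_above_def partitions_def)

text \<open>Splitting off the parts equal to \<open>M+1\<close> gives \<open>Q M = Q (M+1) + X^(c(M+1)) Q M\<close>,
  where \<open>Q M\<close> is the series of partitions with all parts \<open>> M\<close>.\<close>
lemma part_series_step:
  assumes "0 < c"
  shows "part_series c M = part_series c (Suc M) + fps_X ^ (c * Suc M) * part_series c M"
proof -
  let ?w = "\<lambda>l. int c * int (psize l)" and ?add = "add_mset (Suc M)"
  have split: "parts_above M = parts_above (Suc M) \<union> ?add ` parts_above M"
  proof (intro equalityI subsetI)
    fix l assume l: "l \<in> parts_above M"
    show "l \<in> parts_above (Suc M) \<union> ?add ` parts_above M"
    proof (cases "Suc M \<in># l")
      case True
      then have "l = ?add (l - {#Suc M#})" by simp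
      moreover have "l - {#Suc M#} \<in> parts_above M"
        using l unfolding parts_above_def by (simp add: in_diffD)
      ultimately show ?thesis by blast
    next
      case False
      then have "l \<in> parts_above (Suc M)"
        using l unfolding parts_above_def by (auto intro: Suc_lessI)
      then show ?thesis by blast
    qed
  qed (auto simp: parts_above_def)
  have disjoint: "parts_above (Suc M) \<inter> ?add ` parts_above M = {}"
    unfolding parts_above_def by auto
  have bij: "bij_betw ?add (parts_above M) (?add ` parts_above M)"
    by (rule bij_betw_imageI) (auto intro: inj_onI)
  have adm: "admissible (parts_above M) ?w" and adm': "admissible (parts_above (Suc M)) ?w"
    using admissible_parts_above[OF assms] by blast+
  have shift: "?w (?add l) = ?w l + int (c * Suc M)" for l
    unfolding psize_def by (simp add: algebra_simps)
  have sub: "?add ` parts_above M \<subseteq> parts_above M" using split by blast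
  have "part_series c M = part_series c (Suc M) + gser (?add ` parts_above M) ?w (\<lambda>_. 1)"
    unfolding part_series_def by (subst split) (rule gser_Un[OF adm' admissible_subset[OF adm sub] disjoint])
  also have "gser (?add ` parts_above M) ?w (\<lambda>_. 1) = gser (parts_above M) (\<lambda>l. ?w (?add l)) (\<lambda>_. 1)"
    by (rule gser_reindex[OF bij, symmetric])
  also have "\<dots> = fps_X ^ (c * Suc M) * part_series c M"
    unfolding shift part_series_def by (rule gser_shift) simp
  finally show ?thesis .
qed

text \<open>Multiplying the partition series by \<open>(1 - X^c) \<cdots> (1 - X^(cM))\<close> removes the parts \<open>\<le> M\<close>.\<close>
lemma part_series_qprod:
  assumes "0 < c"
  shows "part_series c 0 * qprod ((fps_X :: int fps) ^ c) 1 M = part_series c M"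
proof (induction M)
  case 0
  then show ?case by (simp add: qprod_empty)
next
  case (Suc M)
  have "qprod ((fps_X :: int fps) ^ c) 1 (Suc M) = qprod (fps_X ^ c) 1 M * (1 - fps_X ^ (c * Suc M))"
    by (simp only: qprod_Suc_right[of 1 M] power_mult)
  then have "part_series c 0 * qprod ((fps_X :: int fps) ^ c) 1 (Suc M)
      = (part_series c 0 * qprod (fps_X ^ c) 1 M) * (1 - fps_X ^ (c * Suc M))"
    by (simp only: mult.assoc)
  also have "\<dots> = part_series c M - fps_X ^ (c * Suc M) * part_series c M"
    unfolding Suc.IH by (simp add: algebra_simps)
  also have "\<dots> = part_series c (Suc M)"
    using part_series_step[OF assms, of M] by (simp add: algebra_simps)
  finally show ?case .
qed

lemma part_series_low:
  assumes "0 < c" and "n \<le> M"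
  shows "part_series c M $ n = (if n = 0 then 1 else 0)"
proof -
  have empty: "l = {#}" if "l \<in> parts_above M" "int c * int (psize l) = int n" for l
  proof (rule ccontr)
    assume "l \<noteq> {#}"
    then obtain p where p: "p \<in># l" by (metis multiset_nonemptyE)
    then have "p \<le> sum_mset l" by (rule mem_le_sum_mset)
    also have "\<dots> \<le> c * sum_mset l" using assms(1) by simp
    also have "\<dots> = n" using that(2) unfolding psize_def by (metis of_nat_eq_iff of_nat_mult)
    finally show False using p that(1) assms(2) unfolding parts_above_def by auto
  qed
  have "{#} \<in> parts_above M" and "psize {#} = 0" by (simp_all add: parts_above_def psize_def)
  then have "{l\<in>parts_above M. int c * int (psize l) = int n} = (if n = 0 then {{#}} else {})"
    by (force dest: empty)
  then show ?thesis unfolding part_series_def gser_card by simp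
qed

definition pent_series :: "nat \<Rightarrow> int fps" where
  "pent_series c = gser UNIV (\<lambda>j. int c * pent j) psign"

lemma admissible_pent:
  assumes "0 < c"
  shows "admissible UNIV (\<lambda>j. int c * pent j)"
proof -
  have "{j \<in> UNIV. int c * pent j = n} \<subseteq> {-n..n}" for n
  proof
    fix j assume j: "j \<in> {j \<in> UNIV. int c * pent j = n}"
    have "1 * pent j \<le> int c * pent j" using assms pent_nonneg[of j] by (intro mult_right_mono) auto
    then show "j \<in> {-n..n}" using abs_le_pent[of j] j by auto
  qed
  then have "finite {j \<in> UNIV. int c * pent j = n}" for n by (rule finite_subset) simp
  then show ?thesis unfolding admissible_def using pent_nonneg by simp
qed

lemma shanks_rhs_gser:
  "shanks_rhs ((fps_X :: int fps) ^ c) M = gser {j. \<bar>j\<bar> \<le> int M} (\<lambda>j. int c * pent j) psign"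
proof (induction M)
  case 0
  have "{j :: int. \<bar>j\<bar> \<le> int 0} = insert 0 {}" by auto
  moreover have "gser {} w s = 0" for w s :: "int \<Rightarrow> int" by (rule fps_ext) (simp add: gser_nth)
  ultimately show ?case by (simp add: shanks_rhs_def gser_insert psign_def pent_def)
next
  case (Suc M)
  let ?w = "\<lambda>j. int c * pent j" and ?S = "{j. \<bar>j\<bar> \<le> int M}" and ?j = "int (Suc M)"
  have S: "{j. \<bar>j\<bar> \<le> int (Suc M)} = insert ?j (insert (- ?j) ?S)" by auto
  have finS: "finite ?S" by (rule finite_subset[of _ "{- int M..int M}"]) auto
  have w1: "?w ?j = int (c * pent_pos (Suc M))" using pent_of_nat[of "Suc M"] by (simp del: of_nat_Suc)
  have w2: "?w (- ?j) = int (c * pent_neg (Suc M))" using pent_of_neg_nat[of "Suc M"] by (simp del: of_nat_Suc)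
  have "gser {j. \<bar>j\<bar> \<le> int (Suc M)} ?w psign
     = gser ?S ?w psign + fps_const (psign (- ?j)) * fps_X ^ nat (?w (- ?j))
       + fps_const (psign ?j) * fps_X ^ nat (?w ?j)"
    unfolding S using finS by (simp add: gser_insert w1 w2 del: of_nat_Suc)
  also have "\<dots> = shanks_rhs (fps_X ^ c) M
      + (-1) ^ Suc M * ((fps_X ^ c) ^ pent_pos (Suc M) + (fps_X ^ c) ^ pent_neg (Suc M))"
    unfolding w1 w2 nat_int psign_of_nat Suc.IH
    by (simp add: power_mult algebra_simps flip: fps_const_power fps_const_neg)
  also have "\<dots> = shanks_rhs (fps_X ^ c) (Suc M)"
    unfolding shanks_rhs_def by (simp add: sum.cl_ivl_Suc)
  finally show ?case by simp
qed

text \<open>Terms with \<open>|j| > M\<close> have weight \<open>> M\<close>, so truncation does not change low coefficients.\<close>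
lemma pent_series_trunc:
  assumes "0 < c" and "n \<le> M"
  shows "gser {j. \<bar>j\<bar> \<le> int M} (\<lambda>j. int c * pent j) psign $ n = pent_series c $ n"
proof -
  have "\<bar>j\<bar> \<le> int M" if "int c * pent j = int n" for j
  proof -
    have "1 * pent j \<le> int c * pent j" using assms(1) pent_nonneg[of j] by (intro mult_right_mono) auto
    then show ?thesis using abs_le_pent[of j] that assms(2) by simp
  qed
  then have "{j\<in>{j. \<bar>j\<bar> \<le> int M}. int c * pent j = int n} = {j\<in>UNIV. int c * pent j = int n}"
    by auto
  then show ?thesis unfolding pent_series_def gser_nth by simp
qed

text \<open>In the left-hand side of Shanks' identity at \<open>x = X\<^sup>c\<close>, all terms with \<open>k \<ge> 1\<close>
  are divisible by \<open>X\<^sup>M\<^sup>+\<^sup>1\<close>; so up to degree \<open>M\<close> it agrees with its \<open>k = 0\<close> term.\<close>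
lemma shanks_lhs_low:
  assumes "0 < c" and "n \<le> M"
  shows "shanks_lhs ((fps_X :: int fps) ^ c) M $ n = qprod ((fps_X :: int fps) ^ c) 1 M $ n"
proof -
  let ?x = "(fps_X :: int fps) ^ c"
  have "shanks_term ?x M k $ n = 0" if k: "k \<in> {1..M}" for k
  proof -
    have "?x ^ (k * M + tri k) = fps_X ^ (c * (k * M + tri k))" by (simp only: power_mult)
    then have "shanks_term ?x M k = fps_X ^ (c * (k * M + tri k)) * ((-1) ^ k * qprod ?x (Suc k) M)"
      unfolding shanks_term_def by (simp add: algebra_simps)
    moreover have "n < c * (k * M + tri k)"
    proof -
      have "M \<le> k * M" "1 \<le> tri k" using k tri_ge[of k] by auto
      then have "n < k * M + tri k" using assms(2) by linarith
      also have "\<dots> \<le> c * (k * M + tri k)" using assms(1) by simp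
      finally show ?thesis .
    qed
    ultimately show ?thesis by (simp add: fps_X_power_mult_nth)
  qed
  moreover have "shanks_lhs ?x M = shanks_term ?x M 0 + (\<Sum>k\<in>{1..M}. shanks_term ?x M k)"
    unfolding shanks_lhs_def atMost_atLeast0 by (simp add: sum.atLeast_Suc_atMost)
  ultimately show ?thesis by (simp add: fps_sum_nth shanks_term_def)
qed

theorem euler_pentagonal:
  assumes "0 < c"
  shows "part_series c 0 * pent_series c = 1"
proof (rule fps_ext)
  fix n
  let ?x = "(fps_X :: int fps) ^ c"
  have "(part_series c 0 * pent_series c) $ n = (\<Sum>i=0..n. part_series c 0 $ i * pent_series c $ (n - i))"
    by (rule fps_mult_nth)
  also have "\<dots> = (\<Sum>i=0..n. part_series c 0 $ i * qprod ?x 1 n $ (n - i))"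
  proof (rule sum.cong)
    fix i assume "i \<in> {0..n}"
    have "pent_series c $ (n - i) = shanks_rhs ?x n $ (n - i)"
      using pent_series_trunc[OF assms, of "n - i" n] by (simp add: shanks_rhs_gser)
    also have "\<dots> = qprod ?x 1 n $ (n - i)"
      using shanks_lhs_low[OF assms, of "n - i" n] by (simp add: shanks_identity)
    finally show "part_series c 0 $ i * pent_series c $ (n - i) = part_series c 0 $ i * qprod ?x 1 n $ (n - i)"
      by simp
  qed simp
  also have "\<dots> = (part_series c 0 * qprod ?x 1 n) $ n" by (simp add: fps_mult_nth)
  also have "\<dots> = 1 $ n" using part_series_qprod[OF assms] part_series_low[OF assms, of n n] by simp
  finally show "(part_series c 0 * pent_series c) $ n = 1 $ n" .
qed

definition part_weight :: "nat \<Rightarrow> (nat \<Rightarrow> int) \<Rightarrow> (nat \<Rightarrow> nat multiset) \<Rightarrow> int" where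
  "part_weight t C mu = (\<Sum>i<t. C i * int (psize (mu i)))"

definition quad_weight :: "nat \<Rightarrow> (nat \<Rightarrow> int) \<Rightarrow> (nat \<Rightarrow> int) \<Rightarrow> (nat \<Rightarrow> int) \<Rightarrow> int" where
  "quad_weight t C A d = (\<Sum>i<t. C i * binom2 (d i)) + (\<Sum>i<t. A i * d i)"

definition pent_weight :: "nat \<Rightarrow> (nat \<Rightarrow> int) \<Rightarrow> (nat \<Rightarrow> int) \<Rightarrow> int" where
  "pent_weight t C f = (\<Sum>i<t. C i * pent (f i))"

definition odd_tuples :: "nat \<Rightarrow> (nat \<Rightarrow> int) set" where
  "odd_tuples t = {d \<in> {..<t} \<rightarrow>\<^sub>E (UNIV :: int set). odd (\<Sum>i<t. d i)}"

lemma binom2_double: "2 * binom2 d = d * (d - 1)"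
proof -
  have "even (d * (d - 1))" by simp
  then show ?thesis unfolding binom2_def by simp
qed

lemma quad_term_bounds:
  fixes c a d :: int
  assumes "1 \<le> c" and "0 \<le> a" and "2 * a \<le> c"
  shows "0 \<le> c * binom2 d + a * d \<and> \<bar>d\<bar> \<le> 2 * (c * binom2 d + a * d) + 1"
proof -
  have double: "2 * (c * binom2 d + a * d) = c * (d * (d - 1)) + 2 * a * d"
    unfolding binom2_double[symmetric] by (simp add: algebra_simps)
  have "0 \<le> c * (d * (d - 1)) + 2 * a * d \<and> \<bar>d\<bar> \<le> c * (d * (d - 1)) + 2 * a * d + 1"
  proof (cases "d \<ge> 1")
    case True
    have "d - 1 \<le> d * (d - 1)" using True mult_right_mono[of 1 d "d - 1"] by simp
    also have "\<dots> \<le> c * (d * (d - 1))" using assms True mult_right_mono[of 1 c "d * (d - 1)"] by simp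
    finally have "d - 1 \<le> c * (d * (d - 1))" .
    moreover have "0 \<le> 2 * a * d" using True assms by simp
    ultimately show ?thesis using True by linarith
  next
    case False
    have "0 \<le> (c - 2 * a) * (- d)" using False assms by (intro mult_nonneg_nonneg) auto
    moreover have "d * d \<le> c * (d * d)" using assms mult_right_mono[of 1 c "d * d"] by simp
    moreover have "- d \<le> d * d" using False mult_right_mono[of 1 "- d" "- d"] by (cases "d = 0") auto
    ultimately show ?thesis using False by (simp add: algebra_simps)
  qed
  then show ?thesis unfolding double[symmetric] by auto
qed

lemma quad_weight_nonneg:
  assumes "\<forall>i<t. 1 \<le> C i" and "\<forall>i<t. 0 \<le> A i \<and> 2 * A i \<le> C i"
  shows "0 \<le> quad_weight t C A d"
proof -
  have "quad_weight t C A d = (\<Sum>i<t. C i * binom2 (d i) + A i * d i)"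
    unfolding quad_weight_def by (simp add: sum.distrib)
  also have "0 \<le> \<dots>" using assms quad_term_bounds by (intro sum_nonneg) auto
  finally show ?thesis .
qed

lemma finite_tuple_fibres:
  fixes g :: "nat \<Rightarrow> int \<Rightarrow> int"
  assumes "\<And>i x. i < t \<Longrightarrow> 0 \<le> g i x" and "\<And>i x. i < t \<Longrightarrow> \<bar>x\<bar> \<le> 2 * g i x + 1"
  shows "finite {d \<in> {..<t} \<rightarrow>\<^sub>E (UNIV :: int set). (\<Sum>i<t. g i (d i)) = N}"
proof (rule finite_subset)
  show "{d \<in> {..<t} \<rightarrow>\<^sub>E UNIV. (\<Sum>i<t. g i (d i)) = N} \<subseteq> {..<t} \<rightarrow>\<^sub>E {-(2 * N + 1)..2 * N + 1}"
  proof
    fix d assume d: "d \<in> {d \<in> {..<t} \<rightarrow>\<^sub>E UNIV. (\<Sum>i<t. g i (d i)) = N}"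
    have "d i \<in> {-(2 * N + 1)..2 * N + 1}" if i: "i < t" for i
    proof -
      have "g i (d i) \<le> (\<Sum>j<t. g j (d j))"
        by (rule member_le_sum) (use i assms in auto)
      then have "g i (d i) \<le> N" using d by simp
      moreover have "\<bar>d i\<bar> \<le> 2 * g i (d i) + 1" using assms(2) i by blast
      ultimately show ?thesis by auto
    qed
    then show "d \<in> {..<t} \<rightarrow>\<^sub>E {-(2 * N + 1)..2 * N + 1}" using d by (auto simp: PiE_iff)
  qed
  show "finite ({..<t} \<rightarrow>\<^sub>E {-(2 * N + 1)..2 * N + 1})" by (rule finite_PiE) auto
qed

lemma admissible_quad_weight:
  assumes "\<forall>i<t. 1 \<le> C i" and "\<forall>i<t. 0 \<le> A i \<and> 2 * A i \<le> C i"
    and "\<forall>d\<in>odd_tuples t. 0 \<le> quad_weight t C A d + m"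
  shows "admissible (odd_tuples t) (\<lambda>d. quad_weight t C A d + m)"
proof -
  let ?g = "\<lambda>i x. C i * binom2 x + A i * x"
  have "quad_weight t C A d + m = N \<longleftrightarrow> (\<Sum>i<t. ?g i (d i)) = N - m" for d N
    unfolding quad_weight_def by (auto simp: sum.distrib)
  then have "{d\<in>odd_tuples t. quad_weight t C A d + m = N}
      \<subseteq> {d \<in> {..<t} \<rightarrow>\<^sub>E UNIV. (\<Sum>i<t. ?g i (d i)) = N - m}" for N
    unfolding odd_tuples_def by auto
  moreover have "finite {d \<in> {..<t} \<rightarrow>\<^sub>E UNIV. (\<Sum>i<t. ?g i (d i)) = N - m}" for N
    by (rule finite_tuple_fibres) (use assms(1,2) quad_term_bounds in auto)
  ultimately show ?thesis unfolding admissible_def using assms(3) finite_subset by blast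
qed

definition multi_part_series :: "nat \<Rightarrow> (nat \<Rightarrow> int) \<Rightarrow> int fps" where
  "multi_part_series t C = gser ({..<t} \<rightarrow>\<^sub>E partitions) (part_weight t C) (\<lambda>_. 1)"

definition multi_pent_series :: "nat \<Rightarrow> (nat \<Rightarrow> int) \<Rightarrow> int fps" where
  "multi_pent_series t C = gser ({..<t} \<rightarrow>\<^sub>E UNIV) (pent_weight t C) (\<lambda>f. psign (\<Sum>i<t. f i))"

lemma partitions_eq_parts_above: "partitions = parts_above 0"
  unfolding partitions_def parts_above_def by simp

lemma multi_part_series_prod:
  assumes "\<forall>i<t. 1 \<le> C i"
  shows "multi_part_series t C = (\<Prod>i<t. part_series (nat (C i)) 0)
      \<and> admissible ({..<t} \<rightarrow>\<^sub>E partitions) (part_weight t C)"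
proof -
  have weight: "(\<Sum>i<t. int (nat (C i)) * int (psize (mu i))) = part_weight t C mu" for mu
    unfolding part_weight_def using assms by (intro sum.cong) auto
  have "\<And>i. i < t \<Longrightarrow> admissible partitions (\<lambda>l. int (nat (C i)) * int (psize l))"
    by (rule admissible_partitions) (use assms in auto)
  from gser_PiE[of t "\<lambda>_. partitions" "\<lambda>i l. int (nat (C i)) * int (psize l)" "\<lambda>_ _. 1", OF this]
  show ?thesis unfolding weight multi_part_series_def part_series_def partitions_eq_parts_above
    by simp
qed

lemma multi_pent_series_prod:
  assumes "\<forall>i<t. 1 \<le> C i"
  shows "multi_pent_series t C = (\<Prod>i<t. pent_series (nat (C i)))
      \<and> admissible ({..<t} \<rightarrow>\<^sub>E UNIV) (pent_weight t C)"
proof -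
  have weight: "(\<Sum>i<t. int (nat (C i)) * pent (f i)) = pent_weight t C f" for f
    unfolding pent_weight_def using assms by (intro sum.cong) auto
  have "\<And>i. i < t \<Longrightarrow> admissible UNIV (\<lambda>j. int (nat (C i)) * pent j)"
    by (rule admissible_pent) (use assms in auto)
  from gser_PiE[of t "\<lambda>_. UNIV" "\<lambda>i j. int (nat (C i)) * pent j" "\<lambda>_. psign", OF this]
  show ?thesis unfolding weight multi_pent_series_def pent_series_def prod_psign by simp
qed

theorem multi_euler_pentagonal:
  assumes "\<forall>i<t. 1 \<le> C i"
  shows "multi_part_series t C * multi_pent_series t C = 1"
proof -
  have "multi_part_series t C * multi_pent_series t C
      = (\<Prod>i<t. part_series (nat (C i)) 0 * pent_series (nat (C i)))"
    using multi_part_series_prod[OF assms] multi_pent_series_prod[OF assms] by (simp add: prod.distrib)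
  also have "\<dots> = 1" using assms euler_pentagonal by (intro prod.neutral) auto
  finally show ?thesis .
qed

lemma pent_weight_nonneg: "\<forall>i<t. 1 \<le> C i \<Longrightarrow> 0 \<le> pent_weight t C f"
  unfolding pent_weight_def using pent_nonneg by (intro sum_nonneg) auto

lemma part_weight_nonneg: "\<forall>i<t. 1 \<le> C i \<Longrightarrow> 0 \<le> part_weight t C mu"
  unfolding part_weight_def by (intro sum_nonneg) auto

definition theta_set :: "nat \<Rightarrow> (nat \<Rightarrow> int) \<Rightarrow> (nat \<Rightarrow> int) \<Rightarrow> int \<Rightarrow> (nat \<Rightarrow> int) set" where
  "theta_set t C A N = {d \<in> odd_tuples t. quad_weight t C A d = N}"

definition theta_series :: "nat \<Rightarrow> (nat \<Rightarrow> int) \<Rightarrow> (nat \<Rightarrow> int) \<Rightarrow> int \<Rightarrow> int fps" where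
  "theta_series t C A m = gser (odd_tuples t) (\<lambda>d. quad_weight t C A d + m) (\<lambda>_. 1)"

lemma theta_series_nth: "theta_series t C A m $ n = int (card (theta_set t C A (int n - m)))"
proof -
  have "{d \<in> odd_tuples t. quad_weight t C A d + m = int n} = theta_set t C A (int n - m)"
    unfolding theta_set_def by (auto simp: eq_diff_eq)
  then show ?thesis unfolding theta_series_def gser_card by simp
qed

lemma Tset_eq_Sset: "Tset t C B m N = Sset t C B (N - m)"
  unfolding Tset_def Sset_def by (simp add: eq_diff_eq)

lemma Sset_series_nth:
  assumes "\<forall>i<t. 1 \<le> C i" and "\<forall>i<t. 0 \<le> A i \<and> 2 * A i \<le> C i"
    and "\<forall>d\<in>odd_tuples t. 0 \<le> quad_weight t C A d + m"
  shows "(multi_part_series t C * theta_series t C A m) $ n = int (card (Sset t C A (int n - m)))"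
proof -
  let ?X = "({..<t} \<rightarrow>\<^sub>E partitions) \<times> odd_tuples t"
    and ?w = "\<lambda>p. part_weight t C (fst p) + (quad_weight t C A (snd p) + m)"
  have adm1: "admissible ({..<t} \<rightarrow>\<^sub>E partitions) (part_weight t C)"
    using multi_part_series_prod[OF assms(1)] by (rule conjunct2)
  have adm2: "admissible (odd_tuples t) (\<lambda>d. quad_weight t C A d + m)"
    by (rule admissible_quad_weight[OF assms])
  have "gser ?X ?w (\<lambda>p. 1 * 1) = multi_part_series t C * theta_series t C A m"
    unfolding multi_part_series_def theta_series_def by (rule gser_times[OF adm1 adm2])
  then have product: "multi_part_series t C * theta_series t C A m = gser ?X ?w (\<lambda>_. 1)" by simp
  have fibre: "{p\<in>?X. ?w p = int n} = Sset t C A (int n - m)"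
  proof (rule set_eqI)
    fix p :: "(nat \<Rightarrow> nat multiset) \<times> (nat \<Rightarrow> int)"
    obtain mu d where p: "p = (mu, d)" by fastforce
    show "p \<in> {p\<in>?X. ?w p = int n} \<longleftrightarrow> p \<in> Sset t C A (int n - m)"
      unfolding p Sset_def odd_tuples_def part_weight_def quad_weight_def
      by (simp add: eq_diff_eq add.assoc)
  qed
  show ?thesis unfolding product gser_card fibre ..
qed

definition pent_set :: "nat \<Rightarrow> (nat \<Rightarrow> int) \<Rightarrow> (int \<Rightarrow> bool) \<Rightarrow> int \<Rightarrow> (nat \<Rightarrow> int) set" where
  "pent_set t C P N = {f \<in> {..<t} \<rightarrow>\<^sub>E UNIV. P (\<Sum>i<t. f i) \<and> pent_weight t C f = N}"

definition parity_pent_series :: "nat \<Rightarrow> (nat \<Rightarrow> int) \<Rightarrow> (int \<Rightarrow> bool) \<Rightarrow> int fps" where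
  "parity_pent_series t C P
     = gser ({..<t} \<rightarrow>\<^sub>E UNIV) (pent_weight t C) (\<lambda>f. if P (\<Sum>i<t. f i) then 1 else 0)"

lemma multi_pent_series_parity:
  "multi_pent_series t C = parity_pent_series t C even - parity_pent_series t C odd"
  unfolding multi_pent_series_def parity_pent_series_def gser_diff[symmetric]
  by (rule gser_cong) (simp add: psign_def)

lemma shifted_parity_pent_nth:
  assumes "\<forall>i<t. 1 \<le> C i"
  shows "(fps_X ^ k * parity_pent_series t C P) $ n = int (card (pent_set t C P (int n - int k)))"
proof (cases "n < k")
  case True
  then have "pent_weight t C f \<noteq> int n - int k" for f
    using pent_weight_nonneg[OF assms, of f] by linarith
  then have "pent_set t C P (int n - int k) = {}" unfolding pent_set_def by blast
  then show ?thesis using True by (simp add: fps_X_power_mult_nth)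
next
  case False
  have "finite {f \<in> {..<t} \<rightarrow>\<^sub>E UNIV. pent_weight t C f = int (n - k)}"
    using multi_pent_series_prod[OF assms] unfolding admissible_def by blast
  then have "parity_pent_series t C P $ (n - k)
      = int (card {f \<in> {..<t} \<rightarrow>\<^sub>E UNIV. pent_weight t C f = int (n - k) \<and> P (\<Sum>i<t. f i)})"
    unfolding parity_pent_series_def by (rule gser_indicator)
  also have "{f \<in> {..<t} \<rightarrow>\<^sub>E UNIV. pent_weight t C f = int (n - k) \<and> P (\<Sum>i<t. f i)}
      = pent_set t C P (int n - int k)"
    unfolding pent_set_def using False by auto
  finally show ?thesis using False by (simp add: fps_X_power_mult_nth)
qed

lemma uN_eq:
  "uN t C A k N = card (theta_set t C A N) + card (Sset t C A k) * card (pent_set t C odd (N - k))"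
proof -
  have "{d. d \<in> {..<t} \<rightarrow>\<^sub>E UNIV \<and> odd (\<Sum>i<t. d i) \<and> (\<Sum>i<t. C i * binom2 (d i)) + (\<Sum>i<t. A i * d i) = N}
      = theta_set t C A N"
    unfolding theta_set_def odd_tuples_def quad_weight_def by auto
  moreover have "{f. f \<in> {..<t} \<rightarrow>\<^sub>E UNIV \<and> odd (\<Sum>i<t. f i) \<and> (\<Sum>i<t. C i * pent (f i)) + k = N}
      = pent_set t C odd (N - k)"
    unfolding pent_set_def pent_weight_def by (auto simp: eq_diff_eq)
  ultimately show ?thesis unfolding uN_def by simp
qed

lemma vN_eq:
  "vN t C A B m k N
     = card (theta_set t C B (N - m)) + card (Sset t C A k) * card (pent_set t C even (N - k))"
proof -
  have "{e. e \<in> {..<t} \<rightarrow>\<^sub>E UNIV \<and> odd (\<Sum>i<t. e i) \<and> (\<Sum>i<t. C i * binom2 (e i)) + (\<Sum>i<t. B i * e i) + m = N}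
      = theta_set t C B (N - m)"
    unfolding theta_set_def odd_tuples_def quad_weight_def by (auto simp: eq_diff_eq)
  moreover have "{f. f \<in> {..<t} \<rightarrow>\<^sub>E UNIV \<and> even (\<Sum>i<t. f i) \<and> (\<Sum>i<t. C i * pent (f i)) + k = N}
      = pent_set t C even (N - k)"
    unfolding pent_set_def pent_weight_def by (auto simp: eq_diff_eq)
  ultimately show ?thesis unfolding vN_def by simp
qed

lemma fps_eq_iff_int_coeffs:
  fixes f g :: "'a fps" and a b :: "int \<Rightarrow> 'a"
  assumes "\<And>n. f $ n = a (int n)" and "\<And>n. g $ n = b (int n)" and "\<And>N. N < 0 \<Longrightarrow> a N = b N"
  shows "f = g \<longleftrightarrow> (\<forall>N. a N = b N)"
proof
  assume "f = g"
  show "\<forall>N. a N = b N"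
  proof
    fix N
    show "a N = b N"
    proof (cases "N < 0")
      case False
      then obtain n where "N = int n" by (metis nonneg_int_cases not_less)
      then show ?thesis using assms(1,2) \<open>f = g\<close> by metis
    qed (rule assms(3))
  qed
next
  assume "\<forall>N. a N = b N"
  then show "f = g" by (intro fps_ext) (simp add: assms(1,2))
qed

lemma unit_diff_eq_iff:
  fixes P F a b K :: "'a :: comm_ring_1"
  assumes "P * F = 1"
  shows "P * a - P * b = K \<longleftrightarrow> a - b = K * F"
proof
  assume h: "P * a - P * b = K"
  have "a - b = (P * F) * (a - b)" using assms by simp
  also have "\<dots> = F * (P * a - P * b)" by (simp add: algebra_simps)
  also have "\<dots> = K * F" using h by (simp add: mult.commute)
  finally show "a - b = K * F" .
next
  assume h: "a - b = K * F"
  have "P * a - P * b = P * (a - b)" by (simp add: algebra_simps)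
  also have "\<dots> = K * (P * F)" using h by (simp add: algebra_simps)
  also have "\<dots> = K" using assms by simp
  finally show "P * a - P * b = K" .
qed

text \<open>If \<open>T\<^sub>N = \<emptyset>\<close> for \<open>N \<le> k\<close>, then every odd tuple has shifted weight \<open>> k\<close>: pair it
  with the tuple of empty partitions.\<close>
lemma quad_weight_above:
  assumes "\<And>N. N \<le> k \<Longrightarrow> Tset t C B m N = {}" and "e \<in> odd_tuples t"
  shows "k < quad_weight t C B e + m"
proof -
  let ?mu0 = "\<lambda>i\<in>{..<t}. ({#} :: nat multiset)"
  have "part_weight t C ?mu0 = 0" unfolding part_weight_def psize_def by simp
  then have "(?mu0, e) \<in> Tset t C B m (quad_weight t C B e + m)"
    using assms(2) unfolding Tset_def odd_tuples_def quad_weight_def partitions_def part_weight_def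
    by auto
  then have "Tset t C B m (quad_weight t C B e + m) \<noteq> {}" by blast
  then show ?thesis using assms(1) by (meson not_less)
qed

lemma counts_equal_iff_series:
  assumes C: "\<forall>i<t. 1 \<le> C i" and A: "\<forall>i<t. 0 \<le> A i \<and> 2 * A i \<le> C i"
    and B: "\<forall>i<t. 0 \<le> B i \<and> 2 * B i \<le> C i" and "0 \<le> k"
    and S_below: "\<And>N. N < k \<Longrightarrow> Sset t C A N = {}"
    and T_below: "\<And>N. N \<le> k \<Longrightarrow> Tset t C B m N = {}"
    and B_nonneg: "\<forall>d\<in>odd_tuples t. 0 \<le> quad_weight t C B d + m"
  shows "(\<forall>N>k. card (Sset t C A N) = card (Tset t C B m N))
     \<longleftrightarrow> multi_part_series t C * theta_series t C A 0 - multi_part_series t C * theta_series t C B m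
         = fps_const (int (card (Sset t C A k))) * fps_X ^ nat k"
    (is "?counts \<longleftrightarrow> ?series")
proof -
  let ?a = "\<lambda>N. int (card (Sset t C A N)) - int (card (Tset t C B m N))"
  let ?b = "\<lambda>N. if N = k then int (card (Sset t C A k)) else 0"
  have A_nonneg: "\<forall>d\<in>odd_tuples t. 0 \<le> quad_weight t C A d + 0"
    using quad_weight_nonneg[OF C A] by simp
  have "?series \<longleftrightarrow> (\<forall>N. ?a N = ?b N)"
  proof (rule fps_eq_iff_int_coeffs)
    show "(multi_part_series t C * theta_series t C A 0 - multi_part_series t C * theta_series t C B m) $ n
        = ?a (int n)" for n
      unfolding fps_sub_nth Sset_series_nth[OF C A A_nonneg] Sset_series_nth[OF C B B_nonneg]
        Tset_eq_Sset by simp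
    show "(fps_const (int (card (Sset t C A k))) * fps_X ^ nat k) $ n = ?b (int n)" for n
      using \<open>0 \<le> k\<close> by (auto simp: fps_X_power_nth)
    show "?a N = ?b N" if "N < 0" for N using that \<open>0 \<le> k\<close> S_below T_below by simp
  qed
  also have "(\<forall>N. ?a N = ?b N) \<longleftrightarrow> ?counts"
  proof -
    have "?a N = ?b N" if "N \<le> k" for N
      using that S_below[of N] T_below[of N] by (cases "N = k") simp_all
    moreover have "?a N = ?b N \<longleftrightarrow> card (Sset t C A N) = card (Tset t C B m N)" if "k < N" for N
      using that by simp
    ultimately show ?thesis using not_less by blast
  qed
  finally show ?thesis by blast
qed

lemma uv_equal_iff_series:
  assumes C: "\<forall>i<t. 1 \<le> C i" and A: "\<forall>i<t. 0 \<le> A i \<and> 2 * A i \<le> C i" and "0 \<le> k"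
    and B_nonneg: "\<forall>d\<in>odd_tuples t. 0 \<le> quad_weight t C B d + m"
  shows "(\<forall>N. uN t C A k N = vN t C A B m k N)
     \<longleftrightarrow> theta_series t C A 0 - theta_series t C B m
         = fps_const (int (card (Sset t C A k))) * fps_X ^ nat k * multi_pent_series t C"
    (is "?uv \<longleftrightarrow> ?series")
proof -
  let ?c = "int (card (Sset t C A k))"
  let ?a = "\<lambda>N. int (card (theta_set t C A N)) - int (card (theta_set t C B (N - m)))"
  let ?b = "\<lambda>N. ?c * (int (card (pent_set t C even (N - k))) - int (card (pent_set t C odd (N - k))))"
  have "?series \<longleftrightarrow> (\<forall>N. ?a N = ?b N)"
  proof (rule fps_eq_iff_int_coeffs)
    show "(theta_series t C A 0 - theta_series t C B m) $ n = ?a (int n)" for n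
      unfolding fps_sub_nth theta_series_nth by simp
    show "(fps_const ?c * fps_X ^ nat k * multi_pent_series t C) $ n = ?b (int n)" for n
    proof -
      have "(fps_const ?c * fps_X ^ nat k * multi_pent_series t C) $ n
          = ?c * (fps_X ^ nat k * parity_pent_series t C even) $ n
            - ?c * (fps_X ^ nat k * parity_pent_series t C odd) $ n"
        unfolding multi_pent_series_parity mult.assoc right_diff_distrib
        by (simp only: fps_sub_nth fps_mult_left_const_nth)
      then show ?thesis using \<open>0 \<le> k\<close> by (simp add: shifted_parity_pent_nth[OF C] right_diff_distrib)
    qed
    show "?a N = ?b N" if "N < 0" for N
    proof -
      have "quad_weight t C A d \<noteq> N" for d
        using quad_weight_nonneg[OF C A, of d] \<open>N < 0\<close> by linarith
      then have theta_A: "theta_set t C A N = {}" unfolding theta_set_def by blast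
      have "quad_weight t C B d \<noteq> N - m" if "d \<in> odd_tuples t" for d
        using B_nonneg that \<open>N < 0\<close> by fastforce
      then have theta_B: "theta_set t C B (N - m) = {}" unfolding theta_set_def by blast
      have "pent_weight t C f \<noteq> N - k" for f
        using pent_weight_nonneg[OF C, of f] \<open>N < 0\<close> \<open>0 \<le> k\<close> by linarith
      then have "pent_set t C P (N - k) = {}" for P unfolding pent_set_def by blast
      then show ?thesis using theta_A theta_B by simp
    qed
  qed
  also have "(\<forall>N. ?a N = ?b N) \<longleftrightarrow> ?uv"
  proof -
    have "?a N = ?b N \<longleftrightarrow> int (uN t C A k N) = int (vN t C A B m k N)" for N
      unfolding uN_eq vN_eq by (simp add: algebra_simps)
    then show ?thesis by simp
  qed
  finally show ?thesis by blast
qed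

text \<open>The theorem, with the minimality hypotheses replaced by what the proof uses of them:
  \<open>0 \<le> k\<close>, \<open>S\<^sub>N = \<emptyset>\<close> for \<open>N < k\<close>, and \<open>T\<^sub>N = \<emptyset>\<close> for \<open>N \<le> k\<close>.\<close>
lemma counts_equal_iff_uv:
  assumes C: "\<forall>i<t. 1 \<le> C i" and A: "\<forall>i<t. 0 \<le> A i \<and> 2 * A i \<le> C i"
    and B: "\<forall>i<t. 0 \<le> B i \<and> 2 * B i \<le> C i" and k: "0 \<le> k"
    and S_below: "\<And>N. N < k \<Longrightarrow> Sset t C A N = {}"
    and T_below: "\<And>N. N \<le> k \<Longrightarrow> Tset t C B m N = {}"
  shows "(\<forall>N>k. card (Sset t C A N) = card (Tset t C B m N))
     \<longleftrightarrow> (\<forall>N. uN t C A k N = vN t C A B m k N)"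
proof -
  have B_nonneg: "\<forall>d\<in>odd_tuples t. 0 \<le> quad_weight t C B d + m"
  proof
    fix d assume d: "d \<in> odd_tuples t"
    have "k < quad_weight t C B d + m" using T_below d by (rule quad_weight_above)
    then show "0 \<le> quad_weight t C B d + m" using k by simp
  qed
  show ?thesis
    using counts_equal_iff_series[OF C A B k S_below T_below B_nonneg]
      unit_diff_eq_iff[OF multi_euler_pentagonal[OF C]] uv_equal_iff_series[OF C A k B_nonneg]
    by simp
qed

lemma int_Least_bounded:
  fixes P :: "int \<Rightarrow> bool"
  assumes "P x" and "\<And>y. P y \<Longrightarrow> b \<le> y"
  shows "P (LEAST y. P y)" and "\<And>y. P y \<Longrightarrow> (LEAST y. P y) \<le> y"
proof -
  define n0 where "n0 = (LEAST n :: nat. P (b + int n))"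
  have "P (b + int (nat (x - b)))" using assms by simp
  then have P0: "P (b + int n0)" unfolding n0_def by (rule LeastI)
  have min: "b + int n0 \<le> y" if "P y" for y
  proof -
    have "b \<le> y" using assms(2) that .
    then have "P (b + int (nat (y - b)))" using that by simp
    then have "n0 \<le> nat (y - b)" unfolding n0_def by (rule Least_le)
    then show ?thesis using \<open>b \<le> y\<close> by linarith
  qed
  have "(LEAST y. P y) = b + int n0" by (rule Least_equality) (use P0 min in auto)
  then show "P (LEAST y. P y)" and "\<And>y. P y \<Longrightarrow> (LEAST y. P y) \<le> y" using P0 min by simp_all
qed

lemma Sset_index_nonneg:
  assumes "\<forall>i<t. 1 \<le> C i" and "\<forall>i<t. 0 \<le> A i \<and> 2 * A i \<le> C i" and "Sset t C A N \<noteq> {}"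
  shows "0 \<le> N"
proof -
  obtain mu d where "(mu, d) \<in> Sset t C A N" using assms(3) by auto
  then have "part_weight t C mu + quad_weight t C A d = N"
    unfolding Sset_def part_weight_def quad_weight_def by (simp add: add.assoc)
  then show ?thesis
    using part_weight_nonneg[OF assms(1), of mu] quad_weight_nonneg[OF assms(1,2), of d] by linarith
qed

text \<open>For \<open>t \<ge> 1\<close>: \<open>j\<close> parts equal to 1 in the first partition together with the unit
  vector \<open>d = (1,0,\<dots>,0)\<close> lie in \<open>S\<^sub>N\<close> for \<open>N = C\<^sub>1 j + A\<^sub>1\<close>.\<close>
lemma Sset_witness:
  assumes "1 \<le> t"
  shows "Sset t C A (C 0 * int j + A 0) \<noteq> {}"
proof -
  let ?mu = "\<lambda>i\<in>{..<t}. if i = 0 then replicate_mset j (1 :: nat) else {#}"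
  let ?d = "\<lambda>i\<in>{..<t}. if i = 0 then (1 :: int) else 0"
  have zero: "0 \<in> {..<t}" using assms by simp
  have "(\<Sum>i<t. C i * int (psize (?mu i))) = (\<Sum>i<t. if i = 0 then C 0 * int j else 0)"
    unfolding psize_def by (rule sum.cong) auto
  moreover have "(\<Sum>i<t. C i * binom2 (?d i)) = 0"
    by (rule sum.neutral) (simp add: binom2_def)
  moreover have "(\<Sum>i<t. A i * ?d i) = (\<Sum>i<t. if i = 0 then A 0 else 0)" by (rule sum.cong) auto
  moreover have "(\<Sum>i<t. ?d i) = (\<Sum>i<t. if i = 0 then 1 else 0)" by (rule sum.cong) auto
  ultimately have "(?mu, ?d) \<in> Sset t C A (C 0 * int j + A 0)"
    using zero unfolding Sset_def partitions_def by auto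
  then show ?thesis by blast
qed

text \<open>Above any \<open>k \<ge> 0\<close> there is an index of \<open>S\<close>: take \<open>k + 1\<close> parts equal to 1.\<close>
lemma Sset_nonempty_above:
  assumes "1 \<le> t" and "\<forall>i<t. 1 \<le> C i" and "\<forall>i<t. 0 \<le> A i \<and> 2 * A i \<le> C i" and "0 \<le> k"
  shows "\<exists>N>k. Sset t C A N \<noteq> {}"
proof -
  have "1 \<le> C 0" and "0 \<le> A 0" using assms(1-3) by auto
  moreover have "k + 1 \<le> C 0 * (k + 1)"
    using mult_right_mono[of 1 "C 0" "k + 1"] \<open>1 \<le> C 0\<close> assms(4) by simp
  ultimately have above: "k < C 0 * (k + 1) + A 0" by linarith
  have "int (nat k + 1) = k + 1" using assms(4) by simp
  then have "Sset t C A (C 0 * (k + 1) + A 0) \<noteq> {}"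
    using Sset_witness[OF assms(1), of C A "nat k + 1"] by (simp add: add.commute)
  with above show ?thesis by blast
qed

lemma Tset_Least_le:
  assumes "1 \<le> t" and "\<forall>i<t. 1 \<le> C i" and "\<forall>i<t. 0 \<le> B i \<and> 2 * B i \<le> C i"
    and "Tset t C B m N \<noteq> {}"
  shows "(LEAST N. Tset t C B m N \<noteq> {}) \<le> N"
proof (rule int_Least_bounded(2))
  show "Tset t C B m (C 0 * int 0 + B 0 + m) \<noteq> {}"
    using Sset_witness[OF assms(1), of C B 0] by (simp add: Tset_eq_Sset)
  show "m \<le> N'" if "Tset t C B m N' \<noteq> {}" for N'
    using Sset_index_nonneg[OF assms(2,3), of "N' - m"] that by (simp add: Tset_eq_Sset)
qed (rule assms(4))

theorem lemma3p8:
  fixes t :: nat and C A B :: "nat \<Rightarrow> int" and m k :: int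
  assumes "t \<ge> 1"
    and "\<forall>i<t. C i \<ge> 1"
    and "\<forall>i<t. 0 \<le> A i \<and> 2 * A i \<le> C i"
    and "\<forall>i<t. 0 \<le> B i \<and> 2 * B i \<le> C i"
    and k_def: "k = (LEAST N. Sset t C A N \<noteq> {})"
    and "(LEAST N. Tset t C B m N \<noteq> {}) = (LEAST N. k < N \<and> Sset t C A N \<noteq> {})"
  shows "(\<forall>N>k. card (Sset t C A N) = card (Tset t C B m N))
         \<longleftrightarrow> (\<forall>N. uN t C A k N = vN t C A B m k N)"
proof (rule counts_equal_iff_uv[OF assms(2-4)])
  note S_bound = Sset_index_nonneg[OF assms(2,3)]
  note k_least = int_Least_bounded[of "\<lambda>N. Sset t C A N \<noteq> {}",
      OF Sset_witness[OF assms(1), of C A 0] S_bound, folded k_def]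
  show k: "0 \<le> k" using S_bound k_least(1) .
  show "Sset t C A N = {}" if "N < k" for N using k_least(2)[of N] that by linarith
  \<comment> \<open>the smallest index of \<open>T\<close> is the second smallest index of \<open>S\<close>, hence exceeds \<open>k\<close>\<close>
  obtain N2 where "k < N2" and "Sset t C A N2 \<noteq> {}"
    using Sset_nonempty_above[OF assms(1-3) k] by blast
  then have "k < (LEAST N. k < N \<and> Sset t C A N \<noteq> {})"
    using int_Least_bounded(1)[of "\<lambda>N. k < N \<and> Sset t C A N \<noteq> {}" N2 k] by simp
  then have T_least: "k < (LEAST N. Tset t C B m N \<noteq> {})" using assms(6) by simp
  show "Tset t C B m N = {}" if "N \<le> k" for N
    using Tset_Least_le[OF assms(1,2,4), of m N] T_least that by force
qed

end
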